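(* Let $U=U_1\times\cdots\times U_m$ with $U_i\subseteq\mathbb{R}^p$ be convex, $C\subseteq\mathbb{R}^{mp}$, $\overline{U}=U\cap C$, with $0\in\overline{U}$. Let $b\in\mathbb{R}^m$, let $f_1:\mathbb{R}^{n_1}\to\mathbb{R}$, $f_2:\mathbb{R}^{n_2}\to\mathbb{R}$ be convex with $f_1(0)=f_2(0)=0$, and for each $i\in[m]$ let $g_i(x,y,u_i)$ be concave in $(x,y)$ and convex in $u_i$, with $g_i(0,0,u_i)\ge0$ for all $u\in\overline{U}$ and $g_i(x,y,0)\le0$ for all feasible $x,y$. For a set $S$ define $$z^{\rm ad}(S)=\sup_{x,\ y:S\to\mathbb{R}^{n_2}}\Big\{f_1(x)+\inf_{u\in S}f_2(y(u)):\ g_i(x,y(u),u_i)\le b_i\ \forall u\in S,\ \forall i\Big\},$$ $$z^{\rm st}(S)=\sup_{x,y}\{f_1(x)+f_2(y):\ g_i(x,y,u_i)\le b_i\ \forall u\in S,\ \forall i\},$$ and $z_{\rm aro}=z^{\rm ad}(U)$, $z_{\rm acp}=z^{\rm ad}(\overline{U})$, $z_{\rm ro}=z^{\rm st}(U)$, $z_{\rm cp}=z^{\rm st}(\overline{U})$. Let $\gamma_{\rm ro}=\gamma(U,\Pi(\overline{U}))$ and $\gamma_{\rm aro}=\gamma(U,\overline{U})$. If $z_{\rm acp}>0$ and $z_{\rm ro}<\infty$, then $$\frac{z_{\rm cp}}{z_{\rm ro}}\ge\frac{1}{\gamma_{\rm ro}},\qquad\frac{z_{\rm acp}}{z_{\rm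 aro}}\ge\frac{1}{\gamma_{\rm aro}}.$$ Furthermore, the bounds are tight.
   Context: $u=(u_1,\dots,u_m)$ with $u_i\in\mathbb{R}^p$; $\Pi_i(S)$ is the projection of $S$ onto the $i$-th block, $\Pi(S)=\Pi_1(S)\times\cdots\times\Pi_m(S)$. For $r\ge0$, $rS=\{rx:x\in S\}$; $\gamma(S_1,S_2)=\min\{\gamma\ge0:S_2\subseteq\gamma S_1\}$. *)

theory Defs
  imports "HOL-Analysis.Analysis"
begin

text \<open>Uncertainty vectors u = (u_1,...,u_m), u_i in R^p, are modelled as
  elements of real^'p^'m (block i is u $ i).  Decisions x in R^n1, y in R^n2.\<close>

definition prod_set :: "('m::finite \<Rightarrow> (real^'p::finite) set) \<Rightarrow> (real^'p^'m) set" where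
  "prod_set Ui = {u. \<forall>i. u $ i \<in> Ui i}"

definition block_proj :: "(real^'p::finite^'m::finite) set \<Rightarrow> 'm \<Rightarrow> (real^'p) set" where
  "block_proj S i = (\<lambda>u. u $ i) ` S"

definition Pi_proj :: "(real^'p::finite^'m::finite) set \<Rightarrow> (real^'p^'m) set" where
  "Pi_proj S = prod_set (block_proj S)"

definition gauge_gamma :: "'a::real_vector set \<Rightarrow> 'a set \<Rightarrow> real" where
  "gauge_gamma S1 S2 = Inf {r. r \<ge> 0 \<and> S2 \<subseteq> (\<lambda>x. r *\<^sub>R x) ` S1}"

definition z_ad ::
  "real^'m::finite \<Rightarrow> (real^'n1::finite \<Rightarrow> real) \<Rightarrow> (real^'n2::finite \<Rightarrow> real)
   \<Rightarrow> ('m \<Rightarrow> real^'n1 \<Rightarrow> real^'n2 \<Rightarrow> real^'p::finite \<Rightarrow> real) \<Rightarrow> (real^'p^'m) set \<Rightarrow> ereal" where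
  "z_ad b f1 f2 g S = Sup {ereal (f1 x) + (INF u\<in>S. ereal (f2 (y u))) | x y.
      \<forall>u\<in>S. \<forall>i. g i x (y u) (u $ i) \<le> b $ i}"

definition z_st ::
  "real^'m::finite \<Rightarrow> (real^'n1::finite \<Rightarrow> real) \<Rightarrow> (real^'n2::finite \<Rightarrow> real)
   \<Rightarrow> ('m \<Rightarrow> real^'n1 \<Rightarrow> real^'n2 \<Rightarrow> real^'p::finite \<Rightarrow> real) \<Rightarrow> (real^'p^'m) set \<Rightarrow> ereal" where
  "z_st b f1 f2 g S = Sup {ereal (f1 x + f2 y) | x y.
      \<forall>u\<in>S. \<forall>i. g i x y (u $ i) \<le> b $ i}"

text \<open>Standing hypotheses of the theorem (feasible x,y range over all of R^n1 x R^n2).\<close>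
definition std_hyps ::
  "('m::finite \<Rightarrow> (real^'p::finite) set) \<Rightarrow> (real^'p^'m) set \<Rightarrow> real^'m
   \<Rightarrow> (real^'n1::finite \<Rightarrow> real) \<Rightarrow> (real^'n2::finite \<Rightarrow> real)
   \<Rightarrow> ('m \<Rightarrow> real^'n1 \<Rightarrow> real^'n2 \<Rightarrow> real^'p \<Rightarrow> real) \<Rightarrow> bool" where
  "std_hyps Ui C b f1 f2 g \<longleftrightarrow>
     (\<forall>i. convex (Ui i)) \<and>
     0 \<in> prod_set Ui \<inter> C \<and>
     convex_on UNIV f1 \<and> convex_on UNIV f2 \<and> f1 0 = 0 \<and> f2 0 = 0 \<and>
     (\<forall>i w. concave_on UNIV (\<lambda>z. g i (fst z) (snd z) w)) \<and>
     (\<forall>i x y. convex_on UNIV (\<lambda>w. g i x y w)) \<and>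
     (\<forall>i. \<forall>u\<in>prod_set Ui \<inter> C. g i 0 0 (u $ i) \<ge> 0) \<and>
     (\<forall>i x y. g i x y 0 \<le> 0)"

end

theory Submission
  imports Defs
begin

(* Let r > gamma, so that U \<inter> C lies in r U (for the static bound this follows from the same
  property of the larger set Pi(U \<inter> C)).  If (x, y) is robust against U, then (x/r, y/r), and in
  the adaptive case the policy u |-> y(u/r)/r, is robust against U \<inter> C: convexity of g_i in u_i
  with g_i(.,.,0) <= 0, concavity in (x, y) and g_i(0,0,.) >= 0 give
  g_i(x/r, y/r, u_i) <= g_i(x, y, u_i/r).  Convexity of f_1, f_2 with f(0) = 0 gives
  f(x) <= r f(x/r), hence z(U) <= r z(U \<inter> C), and letting r decrease to gamma yields the bounds.
  They are attained by U_i = {w. |w_k| <= 1}, C = {u. |u_ik| <= gamma} with objective x_a and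
  constraints x_a u_ik <= 1, where the values over U and over U \<inter> C are 1 and 1/gamma. *)

lemma convex_on_le_mult_rescaled:
  fixes f :: "'a::real_vector \<Rightarrow> real"
  assumes "convex_on UNIV f" "f 0 \<le> 0" "0 < r" "r \<le> 1"
  shows "f x \<le> r * f ((1/r) *\<^sub>R x)"
proof -
  have "f ((1 - r) *\<^sub>R 0 + r *\<^sub>R ((1/r) *\<^sub>R x)) \<le> (1 - r) * f 0 + r * f ((1/r) *\<^sub>R x)"
    by (rule convex_onD[OF assms(1)]) (use assms in auto)
  moreover have "(1 - r) * f 0 \<le> 0"
    using assms by (simp add: mult_nonneg_nonpos)
  ultimately show ?thesis
    using assms by simp
qed

lemma rescaled_constraint_le:
  fixes h :: "'a::real_vector \<Rightarrow> 'b::real_vector \<Rightarrow> 'c::real_vector \<Rightarrow> real"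
  assumes convex: "\<And>x y. convex_on UNIV (h x y)"
    and concave: "\<And>w. concave_on UNIV (\<lambda>z. h (fst z) (snd z) w)"
    and at_zero: "\<And>x y. h x y 0 \<le> 0"
    and r: "0 < r" "r \<le> 1"
    and le: "h x y ((1/r) *\<^sub>R w) \<le> c"
    and nonneg: "0 \<le> h 0 0 w"
  shows "h ((1/r) *\<^sub>R x) ((1/r) *\<^sub>R y) w \<le> c"
proof -
  define v where "v = (1/r) *\<^sub>R w"
  have "0 \<le> r * h 0 0 v"
    using nonneg convex_on_le_mult_rescaled[OF convex at_zero r, of 0 0 w] by (simp add: v_def)
  then have "0 \<le> (1 - r) * h 0 0 v"
    using r by (simp add: zero_le_mult_iff)
  moreover have "(1 - r) * h 0 0 v + r * h ((1/r) *\<^sub>R x) ((1/r) *\<^sub>R y) v \<le> h x y v"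
    using concave_onD[OF concave, of r "(0, 0)" "((1/r) *\<^sub>R x, (1/r) *\<^sub>R y)"] r by simp
  ultimately have "r * h ((1/r) *\<^sub>R x) ((1/r) *\<^sub>R y) v \<le> c"
    using le unfolding v_def by linarith
  moreover have "h ((1/r) *\<^sub>R x) ((1/r) *\<^sub>R y) w \<le> r * h ((1/r) *\<^sub>R x) ((1/r) *\<^sub>R y) v"
    unfolding v_def by (rule convex_on_le_mult_rescaled[OF convex at_zero r])
  ultimately show ?thesis
    by linarith
qed

lemma ereal_divide_le_from_right:
  fixes Z W :: ereal
  assumes "0 \<le> \<gamma>" "\<gamma> \<le> 1" "Z \<le> W"
    and bound: "\<And>r. \<gamma> < r \<Longrightarrow> r \<le> 1 \<Longrightarrow> Z \<le> ereal r * W"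
  shows "Z / ereal \<gamma> \<le> W"
proof (cases W)
  case (real w)
  have "Z \<le> ereal (\<gamma> * w)"
  proof (cases "\<gamma> = 1")
    case False
    then have "\<forall>\<^sub>F r in at_right \<gamma>. \<gamma> < r \<and> r < 1"
      using assms(2)
      by (intro eventually_conj eventually_at_right_less order_tendstoD(2)[OF tendsto_ident_at]) simp
    then have "\<forall>\<^sub>F r in at_right \<gamma>. Z \<le> ereal (r * w)"
      by (rule eventually_mono) (use bound real in auto)
    moreover have "((\<lambda>r. ereal (r * w)) \<longlongrightarrow> ereal (\<gamma> * w)) (at_right \<gamma>)"
      by (intro tendsto_intros)
    ultimately show ?thesis
      by (auto intro: tendsto_lowerbound)
  qed (use assms(3) real in simp)
  show ?thesis
  proof (cases "\<gamma> = 0")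
    case True
    \<comment> \<open>here Z / ereal \<gamma> is Z * \<infinity>, since inverse (ereal 0) = \<infinity>\<close>
    then show ?thesis
      using \<open>Z \<le> ereal (\<gamma> * w)\<close> assms(3) real
      by (cases Z) (auto simp: divide_ereal_def)
  next
    case False
    then show ?thesis
      using \<open>Z \<le> ereal (\<gamma> * w)\<close> assms(1) real by (simp add: ereal_divide_le_pos mult.commute)
  qed
qed (use assms(1,3) in auto)

lemma le_ereal_mult_INF:
  fixes A :: ereal
  assumes "0 < c" "\<And>u. u \<in> S \<Longrightarrow> A \<le> ereal (c * h u)"
  shows "A \<le> ereal c * (INF u\<in>S. ereal (h u))"
proof -
  have "A / ereal c \<le> (INF u\<in>S. ereal (h u))"
    using assms by (intro INF_greatest) (simp add: ereal_divide_le_pos mult.commute)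
  then show ?thesis
    using assms(1) by (simp add: ereal_divide_le_pos mult.commute)
qed

lemma scaleR_image_mono_convex:
  fixes U :: "'a::real_vector set"
  assumes "convex U" "0 \<in> U" "0 \<le> s" "s \<le> r"
  shows "(\<lambda>x. s *\<^sub>R x) ` U \<subseteq> (\<lambda>x. r *\<^sub>R x) ` U"
proof
  fix z assume "z \<in> (\<lambda>x. s *\<^sub>R x) ` U"
  then obtain x where x: "x \<in> U" "z = s *\<^sub>R x" by auto
  show "z \<in> (\<lambda>x. r *\<^sub>R x) ` U"
  proof (cases "s = 0")
    case True
    then show ?thesis using x assms(2) by (auto intro!: image_eqI[where x=0])
  next
    case False
    then have "0 < r" using assms by simp
    have "(1 - s/r) *\<^sub>R 0 + (s/r) *\<^sub>R x \<in> U"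
      using assms x \<open>0 < r\<close> by (intro convexD) auto
    moreover have "z = r *\<^sub>R ((1 - s/r) *\<^sub>R 0 + (s/r) *\<^sub>R x)"
      using x \<open>0 < r\<close> by simp
    ultimately show ?thesis by blast
  qed
qed

context
  fixes U S :: "'a::real_vector set"
  assumes U: "convex U" "0 \<in> U" and S: "S \<subseteq> U"
begin

lemma gauge_gamma_nonneg: "0 \<le> gauge_gamma U S"
proof -
  have "1 \<in> {s. 0 \<le> s \<and> S \<subseteq> (\<lambda>x. s *\<^sub>R x) ` U}"
    using S by simp
  then show ?thesis
    unfolding gauge_gamma_def by (intro cInf_greatest) blast+
qed

lemma gauge_gamma_le_one: "gauge_gamma U S \<le> 1"
proof -
  have "1 \<in> {s. 0 \<le> s \<and> S \<subseteq> (\<lambda>x. s *\<^sub>R x) ` U}"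
    using S by simp
  moreover have "bdd_below {s. 0 \<le> s \<and> S \<subseteq> (\<lambda>x. s *\<^sub>R x) ` U}"
    by (rule bdd_belowI[of _ 0]) simp
  ultimately show ?thesis
    unfolding gauge_gamma_def by (rule cInf_lower)
qed

lemma subset_scaleR_image_if_gauge_gamma_less:
  assumes "gauge_gamma U S < r"
  shows "S \<subseteq> (\<lambda>x. r *\<^sub>R x) ` U"
proof -
  let ?A = "{s. 0 \<le> s \<and> S \<subseteq> (\<lambda>x. s *\<^sub>R x) ` U}"
  have "1 \<in> ?A"
    using S by simp
  then obtain s where "s \<in> ?A" "s < r"
    using cInf_lessD[of ?A r] assms unfolding gauge_gamma_def by blast
  then show ?thesis
    using scaleR_image_mono_convex[OF U, of s r] by auto
qed

end

lemma divide_gauge_gamma_le: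
  fixes Z W :: ereal
  assumes U: "convex U" "0 \<in> U" and S: "S \<subseteq> U"
    and scaled: "\<And>r. 0 < r \<Longrightarrow> r \<le> 1 \<Longrightarrow> S \<subseteq> (\<lambda>x. r *\<^sub>R x) ` U \<Longrightarrow> Z \<le> ereal r * W"
  shows "Z / ereal (gauge_gamma U S) \<le> W"
proof (rule ereal_divide_le_from_right[OF gauge_gamma_nonneg[OF U S] gauge_gamma_le_one[OF U S]])
  show "Z \<le> W"
    using scaled[of 1] S by simp
  fix r assume "gauge_gamma U S < r" "r \<le> 1"
  then show "Z \<le> ereal r * W"
    using scaled subset_scaleR_image_if_gauge_gamma_less[OF U S] gauge_gamma_nonneg[OF U S] by simp
qed

lemma prod_set_iff: "u \<in> prod_set Ui \<longleftrightarrow> (\<forall>i. u $ i \<in> Ui i)"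
  by (simp add: prod_set_def)

lemma convex_prod_set: "(\<And>i. convex (Ui i)) \<Longrightarrow> convex (prod_set Ui)"
  unfolding convex_def by (auto simp: prod_set_iff)

lemma subset_Pi_proj: "S \<subseteq> Pi_proj S"
  by (auto simp: Pi_proj_def prod_set_iff block_proj_def)

lemma Pi_proj_subset_prod_set: "S \<subseteq> prod_set Ui \<Longrightarrow> Pi_proj S \<subseteq> prod_set Ui"
  unfolding Pi_proj_def block_proj_def subset_iff prod_set_iff image_iff by metis

lemma std_hyps_rescaled_constraint:
  assumes "std_hyps Ui C b f1 f2 g" "0 < r" "r \<le> 1" "u \<in> prod_set Ui \<inter> C"
    and "g i x y ((1/r) *\<^sub>R (u $ i)) \<le> b $ i"
  shows "g i ((1/r) *\<^sub>R x) ((1/r) *\<^sub>R y) (u $ i) \<le> b $ i"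
proof (rule rescaled_constraint_le[of "g i"])
  show "\<And>x y. convex_on UNIV (g i x y)" "\<And>w. concave_on UNIV (\<lambda>z. g i (fst z) (snd z) w)"
    "\<And>x y. g i x y 0 \<le> 0" "0 \<le> g i 0 0 (u $ i)"
    using assms(1,4) unfolding std_hyps_def by auto
qed (use assms(2,3,5) in auto)

lemma z_st_upper:
  "\<forall>u\<in>S. \<forall>i. g i x y (u $ i) \<le> b $ i \<Longrightarrow> ereal (f1 x + f2 y) \<le> z_st b f1 f2 g S"
  unfolding z_st_def by (rule Sup_upper) blast

lemma z_st_least:
  "(\<And>x y. \<forall>u\<in>S. \<forall>i. g i x y (u $ i) \<le> b $ i \<Longrightarrow> ereal (f1 x + f2 y) \<le> Z)
    \<Longrightarrow> z_st b f1 f2 g S \<le> Z"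
  unfolding z_st_def by (rule Sup_least) blast

lemma z_ad_upper:
  "\<forall>u\<in>S. \<forall>i. g i x (y u) (u $ i) \<le> b $ i
    \<Longrightarrow> ereal (f1 x) + (INF u\<in>S. ereal (f2 (y u))) \<le> z_ad b f1 f2 g S"
  unfolding z_ad_def by (rule Sup_upper) blast

lemma z_ad_least:
  "(\<And>x y. \<forall>u\<in>S. \<forall>i. g i x (y u) (u $ i) \<le> b $ i
      \<Longrightarrow> ereal (f1 x) + (INF u\<in>S. ereal (f2 (y u))) \<le> Z)
    \<Longrightarrow> z_ad b f1 f2 g S \<le> Z"
  unfolding z_ad_def by (rule Sup_least) blast

lemma z_st_le_scaled:
  assumes hyps: "std_hyps Ui C b f1 f2 g" and r: "0 < r" "r \<le> 1"
    and scaled: "prod_set Ui \<inter> C \<subseteq> (\<lambda>x. r *\<^sub>R x) ` prod_set Ui"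
  shows "z_st b f1 f2 g (prod_set Ui) \<le> ereal r * z_st b f1 f2 g (prod_set Ui \<inter> C)"
proof (rule z_st_least)
  fix x y assume feasible: "\<forall>u\<in>prod_set Ui. \<forall>i. g i x y (u $ i) \<le> b $ i"
  let ?x = "(1/r) *\<^sub>R x" and ?y = "(1/r) *\<^sub>R y"
  have feasible': "\<forall>u\<in>prod_set Ui \<inter> C. \<forall>i. g i ?x ?y (u $ i) \<le> b $ i"
  proof (intro ballI allI)
    fix u i assume u: "u \<in> prod_set Ui \<inter> C"
    then obtain v where "v \<in> prod_set Ui" "u = r *\<^sub>R v"
      using scaled by blast
    then have "g i x y ((1/r) *\<^sub>R (u $ i)) \<le> b $ i"
      using feasible r by simp
    then show "g i ?x ?y (u $ i) \<le> b $ i"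
      by (rule std_hyps_rescaled_constraint[OF hyps r u])
  qed
  have "f1 x + f2 y \<le> r * (f1 ?x + f2 ?y)"
    using hyps convex_on_le_mult_rescaled[OF _ _ r, of f1 x] convex_on_le_mult_rescaled[OF _ _ r, of f2 y]
    by (simp add: std_hyps_def distrib_left)
  then have "ereal (f1 x + f2 y) \<le> ereal r * ereal (f1 ?x + f2 ?y)"
    by simp
  also have "\<dots> \<le> ereal r * z_st b f1 f2 g (prod_set Ui \<inter> C)"
    using r z_st_upper[where g=g, OF feasible'] by (intro ereal_mult_left_mono) auto
  finally show "ereal (f1 x + f2 y) \<le> ereal r * z_st b f1 f2 g (prod_set Ui \<inter> C)" .
qed

lemma z_ad_le_scaled:
  assumes hyps: "std_hyps Ui C b f1 f2 g" and r: "0 < r" "r \<le> 1"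
    and scaled: "prod_set Ui \<inter> C \<subseteq> (\<lambda>x. r *\<^sub>R x) ` prod_set Ui"
  shows "z_ad b f1 f2 g (prod_set Ui) \<le> ereal r * z_ad b f1 f2 g (prod_set Ui \<inter> C)"
proof (rule z_ad_least)
  fix x and y :: "_ \<Rightarrow> _"
  assume feasible: "\<forall>u\<in>prod_set Ui. \<forall>i. g i x (y u) (u $ i) \<le> b $ i"
  let ?x = "(1/r) *\<^sub>R x"
  define y' where "y' u = (1/r) *\<^sub>R y ((1/r) *\<^sub>R u)" for u
  have unscaled: "(1/r) *\<^sub>R u \<in> prod_set Ui" if "u \<in> prod_set Ui \<inter> C" for u
    using scaled that r by auto
  have feasible': "\<forall>u\<in>prod_set Ui \<inter> C. \<forall>i. g i ?x (y' u) (u $ i) \<le> b $ i"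
  proof (intro ballI allI)
    fix u i assume u: "u \<in> prod_set Ui \<inter> C"
    then have "g i x (y ((1/r) *\<^sub>R u)) ((1/r) *\<^sub>R (u $ i)) \<le> b $ i"
      using bspec[OF feasible unscaled[OF u]] by simp
    then show "g i ?x (y' u) (u $ i) \<le> b $ i"
      unfolding y'_def by (rule std_hyps_rescaled_constraint[OF hyps r u])
  qed
  have f1: "f1 x \<le> r * f1 ?x"
    using hyps convex_on_le_mult_rescaled[OF _ _ r, of f1 x] by (simp add: std_hyps_def)
  have f2: "(INF u\<in>prod_set Ui. ereal (f2 (y u))) \<le> ereal r * (INF u\<in>prod_set Ui \<inter> C. ereal (f2 (y' u)))"
  proof (rule le_ereal_mult_INF[OF r(1)])
    fix u assume "u \<in> prod_set Ui \<inter> C"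
    then have "(INF u\<in>prod_set Ui. ereal (f2 (y u))) \<le> ereal (f2 (y ((1/r) *\<^sub>R u)))"
      by (intro INF_lower unscaled)
    also have "\<dots> \<le> ereal (r * f2 (y' u))"
      using hyps convex_on_le_mult_rescaled[OF _ _ r, of f2] by (simp add: std_hyps_def y'_def)
    finally show "(INF u\<in>prod_set Ui. ereal (f2 (y u))) \<le> ereal (r * f2 (y' u))" .
  qed
  have "ereal (f1 x) + (INF u\<in>prod_set Ui. ereal (f2 (y u)))
      \<le> ereal r * (ereal (f1 ?x) + (INF u\<in>prod_set Ui \<inter> C. ereal (f2 (y' u))))"
    using add_mono[OF _ f2, of "ereal (f1 x)" "ereal (r * f1 ?x)"] f1 r
    by (simp add: ereal_distrib_left)
  also have "\<dots> \<le> ereal r * z_ad b f1 f2 g (prod_set Ui \<inter> C)"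
    using r z_ad_upper[where g=g, OF feasible'] by (intro ereal_mult_left_mono) auto
  finally show "ereal (f1 x) + (INF u\<in>prod_set Ui. ereal (f2 (y u)))
      \<le> ereal r * z_ad b f1 f2 g (prod_set Ui \<inter> C)" .
qed

lemma z_st_gauge_gamma_bound:
  assumes hyps: "std_hyps Ui C b f1 f2 g"
  shows "z_st b f1 f2 g (prod_set Ui) / ereal (gauge_gamma (prod_set Ui) (Pi_proj (prod_set Ui \<inter> C)))
    \<le> z_st b f1 f2 g (prod_set Ui \<inter> C)"
proof (rule divide_gauge_gamma_le)
  show "convex (prod_set Ui)" "0 \<in> prod_set Ui" "Pi_proj (prod_set Ui \<inter> C) \<subseteq> prod_set Ui"
    using hyps Pi_proj_subset_prod_set[OF Int_lower1]
    by (auto simp: std_hyps_def intro: convex_prod_set)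
qed (use subset_Pi_proj in \<open>blast intro: z_st_le_scaled[OF hyps]\<close>)

lemma z_ad_gauge_gamma_bound:
  assumes hyps: "std_hyps Ui C b f1 f2 g"
  shows "z_ad b f1 f2 g (prod_set Ui) / ereal (gauge_gamma (prod_set Ui) (prod_set Ui \<inter> C))
    \<le> z_ad b f1 f2 g (prod_set Ui \<inter> C)"
proof (rule divide_gauge_gamma_le)
  show "convex (prod_set Ui)" "0 \<in> prod_set Ui"
    using hyps by (auto simp: std_hyps_def intro: convex_prod_set)
qed (auto intro: z_ad_le_scaled[OF hyps])

definition coord_box :: "'p::finite \<Rightarrow> real \<Rightarrow> (real^'p^'m::finite) set" where
  "coord_box k c = {u. \<forall>i. \<bar>u $ i $ k\<bar> \<le> c}"

lemma prod_set_slab: "prod_set (\<lambda>_. {w. \<bar>w $ k\<bar> \<le> c}) = coord_box k c"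
  by (auto simp: prod_set_def coord_box_def)

lemma convex_slab: "convex {w::real^'p::finite. \<bar>w $ k\<bar> \<le> c}"
proof -
  have "{w::real^'p. \<bar>w $ k\<bar> \<le> c} = (\<lambda>w. w $ k) -` {-c..c}"
    by auto
  also have "convex \<dots>"
    by (rule convex_linear_vimage[OF bounded_linear.linear[OF bounded_linear_vec_nth]]) simp
  finally show ?thesis .
qed

lemma coord_box_Int: "c \<le> d \<Longrightarrow> coord_box k d \<inter> coord_box k c = coord_box k c"
  by (auto simp: coord_box_def intro: order_trans)

lemma const_in_coord_box: "0 \<le> c \<Longrightarrow> (\<chi> i j. c) \<in> coord_box k c"
  by (simp add: coord_box_def)

lemma scaleR_image_coord_box:
  assumes "0 < r"
  shows "(\<lambda>x. r *\<^sub>R x) ` coord_box k 1 = coord_box k r"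
proof (intro equalityI subsetI)
  fix u assume "u \<in> coord_box k r"
  then have "(1/r) *\<^sub>R u \<in> coord_box k 1" "u = r *\<^sub>R ((1/r) *\<^sub>R u)"
    using assms by (auto simp: coord_box_def abs_mult field_simps)
  then show "u \<in> (\<lambda>x. r *\<^sub>R x) ` coord_box k 1"
    by blast
qed (use assms in \<open>auto simp: coord_box_def abs_mult\<close>)

lemma gauge_gamma_coord_box:
  assumes "0 < c"
  shows "gauge_gamma (coord_box k 1) (coord_box k c :: (real^'p::finite^'m::finite) set) = c"
  unfolding gauge_gamma_def
proof (rule cInf_eq_minimum)
  let ?box = "\<lambda>c. coord_box k c :: (real^'p^'m) set"
  show "c \<in> {r. 0 \<le> r \<and> ?box c \<subseteq> (\<lambda>x. r *\<^sub>R x) ` ?box 1}"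
    using assms scaleR_image_coord_box[OF assms] by auto
  fix r assume "r \<in> {r. 0 \<le> r \<and> ?box c \<subseteq> (\<lambda>x. r *\<^sub>R x) ` ?box 1}"
  moreover have "(\<chi> i j. c) \<in> ?box c"
    using assms by (simp add: const_in_coord_box)
  ultimately have "0 \<le> r" "(\<chi> i j. c) \<in> (\<lambda>x. r *\<^sub>R x) ` ?box 1"
    by blast+
  then obtain v where v: "v \<in> ?box 1" "(\<chi> i j. c) = r *\<^sub>R v"
    by blast
  have "c = r * v $ i $ k" for i
    using arg_cong[OF v(2), of "\<lambda>u. u $ i $ k"] by simp
  also have "r * v $ i $ k \<le> r" for i
    using v(1) \<open>0 \<le> r\<close> by (intro mult_left_le) (auto simp: coord_box_def abs_le_iff)
  finally show "c \<le> r" .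
qed

lemma Pi_proj_coord_box: "Pi_proj (coord_box k c :: (real^'p::finite^'m::finite) set) = coord_box k c"
proof -
  have "block_proj (coord_box k c :: (real^'p^'m) set) = (\<lambda>_. {w. \<bar>w $ k\<bar> \<le> c})"
  proof (intro ext equalityI subsetI)
    fix i :: 'm and w assume "w \<in> {w. \<bar>w $ k\<bar> \<le> c}"
    then have "(\<chi> j. w) \<in> (coord_box k c :: (real^'p^'m) set)"
      by (simp add: coord_box_def)
    then show "w \<in> block_proj (coord_box k c) i"
      unfolding block_proj_def image_iff by (intro bexI[of _ "\<chi> j. w"]) simp_all
  qed (auto simp: block_proj_def coord_box_def)
  then show ?thesis
    by (simp add: Pi_proj_def prod_set_slab)
qed

lemma Sup_coord_box_objective:
  fixes a :: "'n::finite" and k :: "'p::finite"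
  assumes "0 < c"
  shows "Sup {ereal (x $ a) | x::real^'n.
      \<forall>u\<in>(coord_box k c :: (real^'p^'m::finite) set). \<forall>i. x $ a * u $ i $ k \<le> 1} = ereal (1/c)"
proof (rule cSup_eq_maximum)
  have "(\<chi> j. 1/c :: real^'n) $ a * u $ i $ k \<le> 1" if "u \<in> coord_box k c" for u :: "real^'p^'m" and i
    using that assms by (auto simp: coord_box_def abs_le_iff field_simps)
  then show "ereal (1/c) \<in> {ereal (x $ a) | x::real^'n.
      \<forall>u\<in>(coord_box k c :: (real^'p^'m) set). \<forall>i. x $ a * u $ i $ k \<le> 1}"
    by (intro CollectI exI[of _ "\<chi> j. 1/c"]) simp
next
  fix z assume "z \<in> {ereal (x $ a) | x::real^'n.
      \<forall>u\<in>(coord_box k c :: (real^'p^'m) set). \<forall>i. x $ a * u $ i $ k \<le> 1}"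
  then obtain x :: "real^'n" where "z = ereal (x $ a)" "x $ a * c \<le> 1"
    using const_in_coord_box[of c k] assms by fastforce
  then show "z \<le> ereal (1/c)"
    using assms by (simp add: field_simps)
qed

context
  fixes a :: "'n1::finite" and k :: "'p::finite" and c :: real
  assumes c: "0 < c"
begin

lemma z_st_coord_box:
  "z_st (\<chi> i. 1) (\<lambda>x. x $ a) (\<lambda>_::real^'n2::finite. 0) (\<lambda>i x y w. x $ a * w $ k)
     (coord_box k c :: (real^'p^'m::finite) set) = ereal (1/c)"
  using Sup_coord_box_objective[OF c, of a k] by (simp add: z_st_def)

lemma z_ad_coord_box:
  "z_ad (\<chi> i. 1) (\<lambda>x. x $ a) (\<lambda>_::real^'n2::finite. 0) (\<lambda>i x y w. x $ a * w $ k)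
     (coord_box k c :: (real^'p^'m::finite) set) = ereal (1/c)"
proof -
  have "(\<chi> i j. c) \<in> (coord_box k c :: (real^'p^'m) set)"
    using c by (simp add: const_in_coord_box)
  then have "(INF u\<in>(coord_box k c :: (real^'p^'m) set). ereal 0) = 0"
    by (subst INF_const) auto
  then show ?thesis
    using Sup_coord_box_objective[OF c, of a k] by (simp add: z_ad_def)
qed

end

lemma std_hyps_coord_box:
  fixes a :: "'n1::finite" and k :: "'p::finite"
  assumes "0 \<le> c"
  shows "std_hyps (\<lambda>_::'m::finite. {w::real^'p. \<bar>w $ k\<bar> \<le> 1}) (coord_box k c) (\<chi> i. 1)
     (\<lambda>x::real^'n1. x $ a) (\<lambda>_::real^'n2::finite. 0) (\<lambda>i x y w. x $ a * w $ k)"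
  unfolding std_hyps_def
  using assms convex_slab[of k 1]
  by (auto simp: prod_set_slab coord_box_def convex_on_def concave_on_iff algebra_simps)

lemma coord_box_tight:
  fixes a :: "'n1::finite" and k :: "'p::finite"
  defines "Ub \<equiv> \<lambda>_::'m::finite. {w::real^'p. \<bar>w $ k\<bar> \<le> 1}"
    and "f1 \<equiv> \<lambda>x::real^'n1. x $ a" and "f2 \<equiv> \<lambda>_::real^'n2::finite. 0::real"
    and "g \<equiv> \<lambda>(i::'m) (x::real^'n1) (y::real^'n2) (w::real^'p). x $ a * w $ k"
  assumes c: "0 < c" "c \<le> 1"
  shows "std_hyps Ub (coord_box k c) (\<chi> i. 1) f1 f2 g
    \<and> z_ad (\<chi> i. 1) f1 f2 g (prod_set Ub \<inter> coord_box k c) > 0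
    \<and> z_st (\<chi> i. 1) f1 f2 g (prod_set Ub) < \<infinity>
    \<and> gauge_gamma (prod_set Ub) (Pi_proj (prod_set Ub \<inter> coord_box k c)) = c
    \<and> gauge_gamma (prod_set Ub) (prod_set Ub \<inter> coord_box k c) = c
    \<and> z_st (\<chi> i. 1) f1 f2 g (prod_set Ub \<inter> coord_box k c)
        = z_st (\<chi> i. 1) f1 f2 g (prod_set Ub) / ereal c
    \<and> z_ad (\<chi> i. 1) f1 f2 g (prod_set Ub \<inter> coord_box k c)
        = z_ad (\<chi> i. 1) f1 f2 g (prod_set Ub) / ereal c"
proof -
  have "prod_set Ub = coord_box k 1" "prod_set Ub \<inter> coord_box k c = coord_box k c"
    unfolding Ub_def prod_set_slab using coord_box_Int[OF c(2)] by simp_all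
  then show ?thesis
    using c std_hyps_coord_box[of c k a] unfolding Ub_def f1_def f2_def g_def
    by (simp add: z_st_coord_box z_ad_coord_box gauge_gamma_coord_box Pi_proj_coord_box)
qed

theorem theorem12:
  fixes Ui :: "'m::finite \<Rightarrow> (real^'p::finite) set"
    and C :: "(real^'p^'m) set"
    and b :: "real^'m"
    and f1 :: "real^'n1::finite \<Rightarrow> real"
    and f2 :: "real^'n2::finite \<Rightarrow> real"
    and g :: "'m \<Rightarrow> real^'n1 \<Rightarrow> real^'n2 \<Rightarrow> real^'p \<Rightarrow> real"
  assumes hyps: "std_hyps Ui C b f1 f2 g"
    and acp_pos: "z_ad b f1 f2 g (prod_set Ui \<inter> C) > 0"
    and ro_fin: "z_st b f1 f2 g (prod_set Ui) < \<infinity>"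
  shows "z_st b f1 f2 g (prod_set Ui)
           / ereal (gauge_gamma (prod_set Ui) (Pi_proj (prod_set Ui \<inter> C)))
           \<le> z_st b f1 f2 g (prod_set Ui \<inter> C)
       \<and> z_ad b f1 f2 g (prod_set Ui)
           / ereal (gauge_gamma (prod_set Ui) (prod_set Ui \<inter> C))
           \<le> z_ad b f1 f2 g (prod_set Ui \<inter> C)
       \<and> (\<forall>\<gamma>0::real. 0 < \<gamma>0 \<and> \<gamma>0 \<le> 1 \<longrightarrow>
            (\<exists>(Ui'::'m \<Rightarrow> (real^'p) set) (C'::(real^'p^'m) set) (b'::real^'m)
               (f1'::real^'n1 \<Rightarrow> real) (f2'::real^'n2 \<Rightarrow> real)
               (g'::'m \<Rightarrow> real^'n1 \<Rightarrow> real^'n2 \<Rightarrow> real^'p \<Rightarrow> real).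
               std_hyps Ui' C' b' f1' f2' g'
             \<and> z_ad b' f1' f2' g' (prod_set Ui' \<inter> C') > 0
             \<and> z_st b' f1' f2' g' (prod_set Ui') < \<infinity>
             \<and> gauge_gamma (prod_set Ui') (Pi_proj (prod_set Ui' \<inter> C')) = \<gamma>0
             \<and> gauge_gamma (prod_set Ui') (prod_set Ui' \<inter> C') = \<gamma>0
             \<and> z_st b' f1' f2' g' (prod_set Ui' \<inter> C')
                 = z_st b' f1' f2' g' (prod_set Ui') / ereal \<gamma>0
             \<and> z_ad b' f1' f2' g' (prod_set Ui' \<inter> C')
                 = z_ad b' f1' f2' g' (prod_set Ui') / ereal \<gamma>0))"
  using z_st_gauge_gamma_bound[OF hyps] z_ad_gauge_gamma_bound[OF hyps] coord_box_tight
  by blast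

end
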